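(* Let $(\mathbb{C},\mathcal{N})$ be a regular multi-pointed category with $\mathcal{N}$-kernels, in which every kernel star has a coequaliser and every regular diamond of the form (1) is left saturated. Then the following are equivalent: (i) $(\mathbb{C},\mathcal{N})$ is a star-regular category; (ii) for every morphism $m\colon U\to V$, $m$ is a monomorphism if and only if its kernel star $M^*$ equals $\Delta_U^*$.
   Context: Throughout, $\mathbb{C}$ is a finitely complete regular category. An ideal of morphisms is a class $\mathcal{N}$ of morphisms of $\mathbb{C}$ such that for composable $f,g$, if $f\in\mathcal{N}$ or $g\in\mathcal{N}$ then $gf\in\mathcal{N}$; $(\mathbb{C},\mathcal{N})$ is then called a multi-pointed category. A star on $X$ is a pair of parallel morphisms $\tau=(\tau_1,\tau_2)\colon T\rightrightarrows X$ with $\tau_1\in\mathcal{N}$; it is a monic star if $\tau_1,\tau_2$ are jointly monic. An $\mathcal{N}$-kernel of $f\colon X\to Y$ is a morphism $k\colon \mathcal{N}\ker(f)\to X$ with $fk\in\mathcal{N}$ such that every $g\colon L\to X$ with $fg\in\mathcal{N}$ factors uniquely through $k$. For a relation $\rho=(\rho_1,\rho_2)\colon R\rightrightarrows X$, $\rho^*\colon R^*\rightrightarrows X$ is the monic star $(\rho_1k,\rho_2k)$, where $k\colon R^*\to R$ is the $\mathcal{N}$-kernel of $\rho_1$; $\Delta_X^*:=(1_X,1_X)^*$. The kernel star of $f\colon X\to Y$, denoted by the corresponding capital letter $F^*\rightrightarrows X$, is $Eq(f)^*$, where $Eq(f)$ is the kernel pair of $f$. Every star factors uniquely up to isomorphism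 as a regular epimorphism followed by a monic star; for $f\colon X\to Y$ and a star $\lambda\colon U\rightrightarrows X$, the image $f(\lambda)\colon f(U)\rightrightarrows Y$ is the monic star part of the factorisation of $(f\lambda_1,f\lambda_2)$. A star-regular category is a regular multi-pointed category with $\mathcal{N}$-kernels in which every regular epimorphism is a coequaliser of some star. A diamond is a commutative square $ge=hf$ with $e\colon X\to Z$, $f\colon X\to Y$, $g\colon Z\to W$, $h\colon Y\to W$; it is regular if all four arrows are regular epimorphisms, and left saturated if $e(F^* )=G^*$. A regular diamond of the form (1) is one with $h=1_Y$ (so $ge=f$). *)

theory Defs
  imports Main
begin

text \<open>Abstract (small) categories: objects of type 'o, arrows of type 'm.
  Comp C g f is the composite g after f (defined when Cod f = Dom g).\<close>

record ('o, 'm) category =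
  Ob :: "'o set"
  Ar :: "'m set"
  Dom :: "'m \<Rightarrow> 'o"
  Cod :: "'m \<Rightarrow> 'o"
  Id :: "'o \<Rightarrow> 'm"
  Comp :: "'m \<Rightarrow> 'm \<Rightarrow> 'm"

definition is_category :: "('o, 'm, 'x) category_scheme \<Rightarrow> bool" where
  "is_category C \<longleftrightarrow>
     (\<forall>f\<in>Ar C. Dom C f \<in> Ob C \<and> Cod C f \<in> Ob C) \<and>
     (\<forall>X\<in>Ob C. Id C X \<in> Ar C \<and> Dom C (Id C X) = X \<and> Cod C (Id C X) = X) \<and>
     (\<forall>f\<in>Ar C. \<forall>g\<in>Ar C. Cod C f = Dom C g \<longrightarrow>
        Comp C g f \<in> Ar C \<and> Dom C (Comp C g f) = Dom C f \<and> Cod C (Comp C g f) = Cod C g) \<and>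
     (\<forall>f\<in>Ar C. \<forall>g\<in>Ar C. \<forall>h\<in>Ar C. Cod C f = Dom C g \<longrightarrow> Cod C g = Dom C h \<longrightarrow>
        Comp C h (Comp C g f) = Comp C (Comp C h g) f) \<and>
     (\<forall>f\<in>Ar C. Comp C f (Id C (Dom C f)) = f \<and> Comp C (Id C (Cod C f)) f = f)"

definition parallel :: "('o, 'm, 'x) category_scheme \<Rightarrow> 'm \<Rightarrow> 'm \<Rightarrow> bool" where
  "parallel C f g \<longleftrightarrow> f \<in> Ar C \<and> g \<in> Ar C \<and> Dom C f = Dom C g \<and> Cod C f = Cod C g"

definition mono :: "('o, 'm, 'x) category_scheme \<Rightarrow> 'm \<Rightarrow> bool" where
  "mono C m \<longleftrightarrow> m \<in> Ar C \<and>
     (\<forall>a\<in>Ar C. \<forall>b\<in>Ar C. Cod C a = Dom C m \<longrightarrow> Cod C b = Dom C m \<longrightarrow> Dom C a = Dom C b \<longrightarrow>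
        Comp C m a = Comp C m b \<longrightarrow> a = b)"

definition jointly_monic :: "('o, 'm, 'x) category_scheme \<Rightarrow> 'm \<Rightarrow> 'm \<Rightarrow> bool" where
  "jointly_monic C f g \<longleftrightarrow> parallel C f g \<and>
     (\<forall>a\<in>Ar C. \<forall>b\<in>Ar C. Cod C a = Dom C f \<longrightarrow> Cod C b = Dom C f \<longrightarrow> Dom C a = Dom C b \<longrightarrow>
        Comp C f a = Comp C f b \<longrightarrow> Comp C g a = Comp C g b \<longrightarrow> a = b)"

definition iso :: "('o, 'm, 'x) category_scheme \<Rightarrow> 'm \<Rightarrow> bool" where
  "iso C \<phi> \<longleftrightarrow> \<phi> \<in> Ar C \<and> (\<exists>\<psi>\<in>Ar C. Dom C \<psi> = Cod C \<phi> \<and> Cod C \<psi> = Dom C \<phi> \<and>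
        Comp C \<psi> \<phi> = Id C (Dom C \<phi>) \<and> Comp C \<phi> \<psi> = Id C (Cod C \<phi>))"

definition coequaliser :: "('o, 'm, 'x) category_scheme \<Rightarrow> 'm \<Rightarrow> 'm \<Rightarrow> 'm \<Rightarrow> bool" where
  "coequaliser C f g q \<longleftrightarrow> parallel C f g \<and> q \<in> Ar C \<and> Dom C q = Cod C f \<and>
     Comp C q f = Comp C q g \<and>
     (\<forall>h\<in>Ar C. Dom C h = Cod C f \<longrightarrow> Comp C h f = Comp C h g \<longrightarrow>
        (\<exists>!u. u \<in> Ar C \<and> Dom C u = Cod C q \<and> Cod C u = Cod C h \<and> Comp C u q = h))"

definition regular_epi :: "('o, 'm, 'x) category_scheme \<Rightarrow> 'm \<Rightarrow> bool" where
  "regular_epi C q \<longleftrightarrow> (\<exists>f g. coequaliser C f g q)"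

definition pullback :: "('o, 'm, 'x) category_scheme \<Rightarrow> 'm \<Rightarrow> 'm \<Rightarrow> 'm \<Rightarrow> 'm \<Rightarrow> bool" where
  "pullback C f g p1 p2 \<longleftrightarrow> f \<in> Ar C \<and> g \<in> Ar C \<and> p1 \<in> Ar C \<and> p2 \<in> Ar C \<and>
     Cod C f = Cod C g \<and> Cod C p1 = Dom C f \<and> Cod C p2 = Dom C g \<and> Dom C p1 = Dom C p2 \<and>
     Comp C f p1 = Comp C g p2 \<and>
     (\<forall>a\<in>Ar C. \<forall>b\<in>Ar C. Cod C a = Dom C f \<longrightarrow> Cod C b = Dom C g \<longrightarrow> Dom C a = Dom C b \<longrightarrow>
        Comp C f a = Comp C g b \<longrightarrow>
        (\<exists>!u. u \<in> Ar C \<and> Dom C u = Dom C a \<and> Cod C u = Dom C p1 \<and>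
              Comp C p1 u = a \<and> Comp C p2 u = b))"

definition kernel_pair :: "('o, 'm, 'x) category_scheme \<Rightarrow> 'm \<Rightarrow> 'm \<Rightarrow> 'm \<Rightarrow> bool" where
  "kernel_pair C f p1 p2 \<longleftrightarrow> pullback C f f p1 p2"

definition terminal :: "('o, 'm, 'x) category_scheme \<Rightarrow> 'o \<Rightarrow> bool" where
  "terminal C T \<longleftrightarrow> T \<in> Ob C \<and>
     (\<forall>X\<in>Ob C. \<exists>!t. t \<in> Ar C \<and> Dom C t = X \<and> Cod C t = T)"

definition finitely_complete :: "('o, 'm, 'x) category_scheme \<Rightarrow> bool" where
  "finitely_complete C \<longleftrightarrow> (\<exists>T. terminal C T) \<and>
     (\<forall>f\<in>Ar C. \<forall>g\<in>Ar C. Cod C f = Cod C g \<longrightarrow> (\<exists>p1 p2. pullback C f g p1 p2))"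

definition regular_category :: "('o, 'm, 'x) category_scheme \<Rightarrow> bool" where
  "regular_category C \<longleftrightarrow> is_category C \<and> finitely_complete C \<and>
     (\<forall>f p1 p2. kernel_pair C f p1 p2 \<longrightarrow> (\<exists>q. coequaliser C p1 p2 q)) \<and>
     (\<forall>f g p1 p2. pullback C f g p1 p2 \<longrightarrow> regular_epi C g \<longrightarrow> regular_epi C p1)"

definition ideal :: "('o, 'm, 'x) category_scheme \<Rightarrow> 'm set \<Rightarrow> bool" where
  "ideal C N \<longleftrightarrow> N \<subseteq> Ar C \<and>
     (\<forall>f\<in>Ar C. \<forall>g\<in>Ar C. Cod C f = Dom C g \<longrightarrow> (f \<in> N \<or> g \<in> N) \<longrightarrow> Comp C g f \<in> N)"

definition N_kernel :: "('o, 'm, 'x) category_scheme \<Rightarrow> 'm set \<Rightarrow> 'm \<Rightarrow> 'm \<Rightarrow> bool" where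
  "N_kernel C N f k \<longleftrightarrow> f \<in> Ar C \<and> k \<in> Ar C \<and> Cod C k = Dom C f \<and> Comp C f k \<in> N \<and>
     (\<forall>g\<in>Ar C. Cod C g = Dom C f \<longrightarrow> Comp C f g \<in> N \<longrightarrow>
        (\<exists>!u. u \<in> Ar C \<and> Dom C u = Dom C g \<and> Cod C u = Dom C k \<and> Comp C k u = g))"

definition has_N_kernels :: "('o, 'm, 'x) category_scheme \<Rightarrow> 'm set \<Rightarrow> bool" where
  "has_N_kernels C N \<longleftrightarrow> (\<forall>f\<in>Ar C. \<exists>k. N_kernel C N f k)"

definition star :: "('o, 'm, 'x) category_scheme \<Rightarrow> 'm set \<Rightarrow> 'm \<Rightarrow> 'm \<Rightarrow> bool" where
  "star C N t1 t2 \<longleftrightarrow> parallel C t1 t2 \<and> t1 \<in> N"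

definition star_of :: "('o, 'm, 'x) category_scheme \<Rightarrow> 'm set \<Rightarrow> 'm \<Rightarrow> 'm \<Rightarrow> 'm \<Rightarrow> 'm \<Rightarrow> bool" where
  "star_of C N r1 r2 s1 s2 \<longleftrightarrow> parallel C r1 r2 \<and>
     (\<exists>k. N_kernel C N r1 k \<and> s1 = Comp C r1 k \<and> s2 = Comp C r2 k)"

text \<open>(s1, s2) is (a choice of) the kernel star F^* = Eq(f)^* of f.\<close>
definition kernel_star :: "('o, 'm, 'x) category_scheme \<Rightarrow> 'm set \<Rightarrow> 'm \<Rightarrow> 'm \<Rightarrow> 'm \<Rightarrow> bool" where
  "kernel_star C N f s1 s2 \<longleftrightarrow> (\<exists>p1 p2. kernel_pair C f p1 p2 \<and> star_of C N p1 p2 s1 s2)"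

text \<open>(s1, s2) is (a choice of) Delta_U^* = (1_U, 1_U)^*.\<close>
definition diag_star :: "('o, 'm, 'x) category_scheme \<Rightarrow> 'm set \<Rightarrow> 'o \<Rightarrow> 'm \<Rightarrow> 'm \<Rightarrow> bool" where
  "diag_star C N U s1 s2 \<longleftrightarrow> star_of C N (Id C U) (Id C U) s1 s2"

text \<open>Equality of (monic) stars / relations: equal as subobjects, i.e. up to a
  (unique) isomorphism of their domains.\<close>
definition same_rel :: "('o, 'm, 'x) category_scheme \<Rightarrow> 'm \<Rightarrow> 'm \<Rightarrow> 'm \<Rightarrow> 'm \<Rightarrow> bool" where
  "same_rel C s1 s2 t1 t2 \<longleftrightarrow> parallel C s1 s2 \<and> parallel C t1 t2 \<and> Cod C s1 = Cod C t1 \<and>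
     (\<exists>\<phi>. iso C \<phi> \<and> Dom C \<phi> = Dom C t1 \<and> Cod C \<phi> = Dom C s1 \<and>
          Comp C s1 \<phi> = t1 \<and> Comp C s2 \<phi> = t2)"

text \<open>(m1, m2) is (a choice of) the image f(lambda): the jointly monic part of the
  (regular epi, jointly monic) factorisation of (f l1, f l2).\<close>
definition image_star :: "('o, 'm, 'x) category_scheme \<Rightarrow> 'm \<Rightarrow> 'm \<Rightarrow> 'm \<Rightarrow> 'm \<Rightarrow> 'm \<Rightarrow> bool" where
  "image_star C f l1 l2 m1 m2 \<longleftrightarrow> f \<in> Ar C \<and> parallel C l1 l2 \<and> Cod C l1 = Dom C f \<and>
     jointly_monic C m1 m2 \<and> Cod C m1 = Cod C f \<and>
     (\<exists>e. regular_epi C e \<and> Dom C e = Dom C l1 \<and> Cod C e = Dom C m1 \<and>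
          Comp C m1 e = Comp C f l1 \<and> Comp C m2 e = Comp C f l2)"

definition diamond :: "('o, 'm, 'x) category_scheme \<Rightarrow> 'm \<Rightarrow> 'm \<Rightarrow> 'm \<Rightarrow> 'm \<Rightarrow> bool" where
  "diamond C e f g h \<longleftrightarrow> e \<in> Ar C \<and> f \<in> Ar C \<and> g \<in> Ar C \<and> h \<in> Ar C \<and>
     Dom C e = Dom C f \<and> Cod C e = Dom C g \<and> Cod C f = Dom C h \<and> Cod C g = Cod C h \<and>
     Comp C g e = Comp C h f"

definition regular_diamond :: "('o, 'm, 'x) category_scheme \<Rightarrow> 'm \<Rightarrow> 'm \<Rightarrow> 'm \<Rightarrow> 'm \<Rightarrow> bool" where
  "regular_diamond C e f g h \<longleftrightarrow> diamond C e f g h \<and>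
     regular_epi C e \<and> regular_epi C f \<and> regular_epi C g \<and> regular_epi C h"

definition left_saturated :: "('o, 'm, 'x) category_scheme \<Rightarrow> 'm set \<Rightarrow> 'm \<Rightarrow> 'm \<Rightarrow> 'm \<Rightarrow> 'm \<Rightarrow> bool" where
  "left_saturated C N e f g h \<longleftrightarrow>
     (\<exists>F1 F2 G1 G2 m1 m2. kernel_star C N f F1 F2 \<and> kernel_star C N g G1 G2 \<and>
        image_star C e F1 F2 m1 m2 \<and> same_rel C m1 m2 G1 G2)"

definition star_regular :: "('o, 'm, 'x) category_scheme \<Rightarrow> 'm set \<Rightarrow> bool" where
  "star_regular C N \<longleftrightarrow> regular_category C \<and> ideal C N \<and> has_N_kernels C N \<and>
     (\<forall>q. regular_epi C q \<longrightarrow> (\<exists>t1 t2. star C N t1 t2 \<and> coequaliser C t1 t2 q))"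

end

theory Submission
  imports Defs
begin

text \<open>A monomorphism has kernel pair (1, 1), so its kernel star is the diagonal star. Conversely,
  if the kernel star of m has equal legs and the coequaliser q of the kernel pair of m is the
  coequaliser of some star, that star factors through the kernel star of m and so has equal
  legs; hence q is split monic, the kernel pair is diagonal, and m is monic. For the other
  direction, every regular epimorphism turns out to coequalise its own kernel star.\<close>

lemma ex1_unique: "\<lbrakk>\<exists>!x. P x; P a; P b\<rbrakk> \<Longrightarrow> a = b"
  by blast

lemma monoD:
  "\<lbrakk>mono C m; a \<in> Ar C; b \<in> Ar C; Cod C a = Dom C m; Cod C b = Dom C m; Dom C a = Dom C b;
    Comp C m a = Comp C m b\<rbrakk> \<Longrightarrow> a = b"
  unfolding mono_def by blast

lemma jointly_monicD:
  "\<lbrakk>jointly_monic C f g; a \<in> Ar C; b \<in> Ar C; Cod C a = Dom C f; Cod C b = Dom C f;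
    Dom C a = Dom C b; Comp C f a = Comp C f b; Comp C g a = Comp C g b\<rbrakk> \<Longrightarrow> a = b"
  unfolding jointly_monic_def by blast

locale category =
  fixes C :: "('o, 'm, 'x) category_scheme"
  assumes is_category: "is_category C"
begin

lemma comp_in_Ar [simp]: "\<lbrakk>f \<in> Ar C; g \<in> Ar C; Cod C f = Dom C g\<rbrakk> \<Longrightarrow> Comp C g f \<in> Ar C"
  using is_category unfolding is_category_def by blast

lemma Dom_comp [simp]: "\<lbrakk>f \<in> Ar C; g \<in> Ar C; Cod C f = Dom C g\<rbrakk> \<Longrightarrow> Dom C (Comp C g f) = Dom C f"
  using is_category unfolding is_category_def by blast

lemma Cod_comp [simp]: "\<lbrakk>f \<in> Ar C; g \<in> Ar C; Cod C f = Dom C g\<rbrakk> \<Longrightarrow> Cod C (Comp C g f) = Cod C g"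
  using is_category unfolding is_category_def by blast

lemma comp_assoc [simp]:
  "\<lbrakk>f \<in> Ar C; g \<in> Ar C; h \<in> Ar C; Cod C f = Dom C g; Cod C g = Dom C h\<rbrakk> \<Longrightarrow>
   Comp C (Comp C h g) f = Comp C h (Comp C g f)"
  using is_category unfolding is_category_def by metis

lemma Dom_in_Ob: "f \<in> Ar C \<Longrightarrow> Dom C f \<in> Ob C"
  using is_category unfolding is_category_def by blast

lemma Cod_in_Ob: "f \<in> Ar C \<Longrightarrow> Cod C f \<in> Ob C"
  using is_category unfolding is_category_def by blast

lemma Id_in_Ar [simp]: "X \<in> Ob C \<Longrightarrow> Id C X \<in> Ar C"
  using is_category unfolding is_category_def by blast

lemma Dom_Id [simp]: "X \<in> Ob C \<Longrightarrow> Dom C (Id C X) = X"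
  using is_category unfolding is_category_def by blast

lemma Cod_Id [simp]: "X \<in> Ob C \<Longrightarrow> Cod C (Id C X) = X"
  using is_category unfolding is_category_def by blast

lemma comp_Id_right [simp]: "\<lbrakk>f \<in> Ar C; X = Dom C f\<rbrakk> \<Longrightarrow> Comp C f (Id C X) = f"
  using is_category unfolding is_category_def by blast

lemma comp_Id_left [simp]: "\<lbrakk>f \<in> Ar C; X = Cod C f\<rbrakk> \<Longrightarrow> Comp C (Id C X) f = f"
  using is_category unfolding is_category_def by blast

lemma iso_cancel_right:
  assumes "iso C \<phi>" "s1 \<in> Ar C" "s2 \<in> Ar C" "Dom C s1 = Cod C \<phi>" "Dom C s2 = Cod C \<phi>"
    and "Comp C s1 \<phi> = Comp C s2 \<phi>"
  shows "s1 = s2"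
proof -
  obtain \<psi> where \<psi>: "\<phi> \<in> Ar C" "\<psi> \<in> Ar C" "Dom C \<psi> = Cod C \<phi>" "Cod C \<psi> = Dom C \<phi>"
    "Comp C \<phi> \<psi> = Id C (Cod C \<phi>)"
    using assms(1) unfolding iso_def by blast
  have "s1 = Comp C (Comp C s1 \<phi>) \<psi>" using \<psi> assms(2,4) by simp
  also have "\<dots> = Comp C (Comp C s2 \<phi>) \<psi>" using assms(6) by simp
  also have "\<dots> = s2" using \<psi> assms(3,5) by simp
  finally show ?thesis .
qed

lemma coequaliserD:
  assumes "coequaliser C a b q"
  shows "a \<in> Ar C" "b \<in> Ar C" "Dom C a = Dom C b" "Cod C a = Cod C b" "q \<in> Ar C"
    "Dom C q = Cod C a" "Comp C q a = Comp C q b"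
  using assms unfolding coequaliser_def parallel_def by auto

lemma coequaliser_factors:
  assumes "coequaliser C a b q" "h \<in> Ar C" "Dom C h = Cod C a" "Comp C h a = Comp C h b"
  obtains u where "u \<in> Ar C" "Dom C u = Cod C q" "Cod C u = Cod C h" "Comp C u q = h"
  using assms unfolding coequaliser_def by blast

lemma regular_epi_cancel:
  assumes q: "regular_epi C q"
    and x: "x \<in> Ar C" "Dom C x = Cod C q" and y: "y \<in> Ar C" "Dom C y = Cod C q"
    and "Cod C x = Cod C y" and eq: "Comp C x q = Comp C y q"
  shows "x = y"
proof -
  obtain a b where c: "coequaliser C a b q" using q unfolding regular_epi_def by blast
  note cD = coequaliserD[OF c]
  let ?h = "Comp C x q"
  have "?h \<in> Ar C" "Dom C ?h = Cod C a" "Comp C ?h a = Comp C ?h b" using cD x by auto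
  then have "\<exists>!u. u \<in> Ar C \<and> Dom C u = Cod C q \<and> Cod C u = Cod C ?h \<and> Comp C u q = ?h"
    using c unfolding coequaliser_def by blast
  moreover have "Cod C ?h = Cod C x" using cD x by simp
  ultimately show ?thesis using assms by metis
qed

lemma regular_epi_Id: "X \<in> Ob C \<Longrightarrow> regular_epi C (Id C X)"
  unfolding regular_epi_def coequaliser_def parallel_def
  by (rule exI[of _ "Id C X"], rule exI[of _ "Id C X"]) auto

lemma coequaliser_equal_pair_retraction:
  assumes "coequaliser C a a q"
  obtains w where "w \<in> Ar C" "Dom C w = Cod C q" "Comp C w q = Id C (Dom C q)"
proof -
  note cD = coequaliserD[OF assms]
  have "Id C (Cod C a) \<in> Ar C" "Dom C (Id C (Cod C a)) = Cod C a"
    using cD Cod_in_Ob by auto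
  then show ?thesis using that assms cD(6) unfolding coequaliser_def by metis
qed

lemma mono_regular_epi_iso:
  assumes m: "mono C g" and r: "regular_epi C g"
  shows "iso C g"
proof -
  obtain a b where c: "coequaliser C a b g" using r unfolding regular_epi_def by blast
  note cD = coequaliserD[OF c]
  have "a = b" using m cD(1-4,6,7) unfolding mono_def by simp
  then obtain w where w: "w \<in> Ar C" "Dom C w = Cod C g" "Comp C w g = Id C (Dom C g)"
    using coequaliser_equal_pair_retraction c by blast
  have Dg: "Dom C g \<in> Ob C" and Cg: "Cod C g \<in> Ob C" using cD(5) Dom_in_Ob Cod_in_Ob by auto
  have "Cod C w = Cod C (Comp C w g)" using w(1,2) cD(5) by simp
  then have cw: "Cod C w = Dom C g" using w(3) Dg by simp
  have "Comp C (Comp C g w) g = Comp C (Id C (Cod C g)) g"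
    using w cw cD(5) by simp
  then have "Comp C g w = Id C (Cod C g)"
    using regular_epi_cancel[OF r] w cw cD(5) Cg by simp
  then show ?thesis unfolding iso_def using w cw cD(5) by blast
qed

lemma coequaliser_comp_iso:
  assumes q: "coequaliser C a b q" and g: "iso C g" "Dom C g = Cod C q"
  shows "coequaliser C a b (Comp C g q)"
proof -
  note qD = coequaliserD[OF q]
  obtain w where w: "g \<in> Ar C" "w \<in> Ar C" "Dom C w = Cod C g" "Cod C w = Dom C g"
    "Comp C w g = Id C (Dom C g)"
    using g(1) unfolding iso_def by blast
  have q_epi: "regular_epi C q" unfolding regular_epi_def using q by blast
  show ?thesis
    unfolding coequaliser_def parallel_def
  proof (intro conjI ballI impI)
    fix h assume h: "h \<in> Ar C" "Dom C h = Cod C a" "Comp C h a = Comp C h b"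
    obtain u where u: "u \<in> Ar C" "Dom C u = Cod C q" "Cod C u = Cod C h" "Comp C u q = h"
      using coequaliser_factors[OF q h] .
    have wgq: "Comp C w (Comp C g q) = q"
      using comp_assoc[of q g w] w g(2) qD(5) by (simp del: comp_assoc)
    have uw: "Comp C (Comp C u w) (Comp C g q) = h"
      using u w g(2) qD(5) wgq by simp
    show "\<exists>!x. x \<in> Ar C \<and> Dom C x = Cod C (Comp C g q) \<and> Cod C x = Cod C h \<and> Comp C x (Comp C g q) = h"
    proof (rule ex1I[of _ "Comp C u w"])
      fix x assume x: "x \<in> Ar C \<and> Dom C x = Cod C (Comp C g q) \<and> Cod C x = Cod C h \<and>
        Comp C x (Comp C g q) = h"
      have "Comp C (Comp C x g) q = h"
        using x w g(2) qD(5) by simp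
      moreover have "Comp C (Comp C (Comp C u w) g) q = h"
        using u w g(2) qD(5) wgq by simp
      ultimately have "Comp C x g = Comp C (Comp C u w) g"
        using regular_epi_cancel[OF q_epi] x u w g(2) qD(5) by simp
      then show "x = Comp C u w"
        using iso_cancel_right[OF g(1)] x u w g(2) qD(5) by simp
    qed (use u w g(2) qD(5) uw in auto)
  qed (use qD w g(2) in auto)
qed

lemma coequaliser_right_factor:
  assumes f: "coequaliser C a b f" and q: "regular_epi C q"
    and g: "g \<in> Ar C" "Dom C g = Cod C q" "Comp C g q = f"
  shows "coequaliser C (Comp C q a) (Comp C q b) g"
proof -
  note fD = coequaliserD[OF f]
  have qA: "q \<in> Ar C" using q coequaliserD(5) unfolding regular_epi_def by blast
  have dq: "Dom C q = Cod C a" using fD(6) g qA by (metis Dom_comp)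
  show ?thesis
    unfolding coequaliser_def parallel_def
  proof (intro conjI ballI impI)
    show "Comp C g (Comp C q a) = Comp C g (Comp C q b)"
      using fD g qA dq by (simp flip: comp_assoc)
  next
    fix h assume h: "h \<in> Ar C" "Dom C h = Cod C (Comp C q a)"
      "Comp C h (Comp C q a) = Comp C h (Comp C q b)"
    have dh: "Dom C h = Cod C q" using h(2) qA fD dq by simp
    have "Comp C (Comp C h q) a = Comp C (Comp C h q) b" using h dh qA fD dq by simp
    moreover have "Comp C h q \<in> Ar C" "Dom C (Comp C h q) = Cod C a" using h dh qA dq by auto
    ultimately obtain w where w: "w \<in> Ar C" "Dom C w = Cod C f" "Cod C w = Cod C h"
      "Comp C w f = Comp C h q"
      using coequaliser_factors[OF f] h dh qA by (metis Cod_comp)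
    have cf: "Cod C f = Cod C g" using g qA by (metis Cod_comp)
    then have "Comp C (Comp C w g) q = Comp C h q" using w g qA by simp
    moreover have "Comp C w g \<in> Ar C" "Dom C (Comp C w g) = Cod C q" "Cod C (Comp C w g) = Cod C h"
      using w g qA \<open>Cod C f = Cod C g\<close> by simp_all
    ultimately have wg: "Comp C w g = h"
      using regular_epi_cancel[OF q _ _ h(1) dh] by simp
    show "\<exists>!u. u \<in> Ar C \<and> Dom C u = Cod C g \<and> Cod C u = Cod C h \<and> Comp C u g = h"
    proof (rule ex1I[of _ w])
      fix u assume u: "u \<in> Ar C \<and> Dom C u = Cod C g \<and> Cod C u = Cod C h \<and> Comp C u g = h"
      have "Comp C u f = Comp C w f"
        using comp_assoc[of q g u] u w g qA by (simp del: comp_assoc)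
      moreover have "regular_epi C f" unfolding regular_epi_def using f by blast
      ultimately show "u = w"
        using regular_epi_cancel[of f u w] u w g qA cf by simp
    qed (use w g(1,2) wg qA cf in simp)
  qed (use fD qA dq g(1,2) in simp_all)
qed

lemma kernel_pairD:
  assumes "kernel_pair C f p1 p2"
  shows "f \<in> Ar C" "p1 \<in> Ar C" "p2 \<in> Ar C" "Cod C p1 = Dom C f" "Cod C p2 = Dom C f"
    "Dom C p1 = Dom C p2" "Comp C f p1 = Comp C f p2"
  using assms unfolding kernel_pair_def pullback_def by auto

lemma kernel_pair_factors:
  assumes "kernel_pair C f p1 p2" "a \<in> Ar C" "b \<in> Ar C" "Cod C a = Dom C f" "Cod C b = Dom C f"
    "Dom C a = Dom C b" "Comp C f a = Comp C f b"
  obtains u where "u \<in> Ar C" "Dom C u = Dom C a" "Cod C u = Dom C p1"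
    "Comp C p1 u = a" "Comp C p2 u = b"
  using assms unfolding kernel_pair_def pullback_def by blast

lemma kernel_pair_jointly_monic:
  assumes kp: "kernel_pair C f p1 p2"
  shows "jointly_monic C p1 p2"
  unfolding jointly_monic_def parallel_def
proof (intro conjI ballI impI)
  note pD = kernel_pairD[OF kp]
  have U: "\<forall>x\<in>Ar C. \<forall>y\<in>Ar C. Cod C x = Dom C f \<longrightarrow> Cod C y = Dom C f \<longrightarrow> Dom C x = Dom C y \<longrightarrow>
      Comp C f x = Comp C f y \<longrightarrow>
      (\<exists>!u. u \<in> Ar C \<and> Dom C u = Dom C x \<and> Cod C u = Dom C p1 \<and>
        Comp C p1 u = x \<and> Comp C p2 u = y)"
    using kp unfolding kernel_pair_def pullback_def by (elim conjE)
  fix a b assume ab: "a \<in> Ar C" "b \<in> Ar C" "Cod C a = Dom C p1" "Cod C b = Dom C p1"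
    "Dom C a = Dom C b" "Comp C p1 a = Comp C p1 b" "Comp C p2 a = Comp C p2 b"
  let ?x = "Comp C p1 a" and ?y = "Comp C p2 a"
  have "Comp C f ?x = Comp C (Comp C f p1) a" using pD(1-6) ab by simp
  also have "\<dots> = Comp C (Comp C f p2) a" using pD(7) by simp
  also have "\<dots> = Comp C f ?y" using pD(1-6) ab by simp
  finally have "Comp C f ?x = Comp C f ?y" .
  moreover have "?x \<in> Ar C" "?y \<in> Ar C" "Cod C ?x = Dom C f" "Cod C ?y = Dom C f"
    "Dom C ?x = Dom C ?y" "Dom C ?x = Dom C a"
    using pD(1-6) ab(1,3) by simp_all
  ultimately have "\<exists>!u. u \<in> Ar C \<and> Dom C u = Dom C a \<and> Cod C u = Dom C p1 \<and>
      Comp C p1 u = ?x \<and> Comp C p2 u = ?y"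
    using U by simp
  then show "a = b" by (rule ex1_unique) (use ab in simp_all)
qed (use kernel_pairD[OF kp] in simp_all)

lemma jointly_monic_comp_mono:
  assumes jm: "jointly_monic C p1 p2" and k: "mono C k" "Cod C k = Dom C p1"
  shows "jointly_monic C (Comp C p1 k) (Comp C p2 k)"
proof -
  have p: "p1 \<in> Ar C" "p2 \<in> Ar C" "Dom C p1 = Dom C p2" "Cod C p1 = Cod C p2"
    using jm unfolding jointly_monic_def parallel_def by auto
  have kA: "k \<in> Ar C" using k unfolding mono_def by blast
  have "a = b"
    if ab: "a \<in> Ar C" "b \<in> Ar C" "Cod C a = Dom C k" "Cod C b = Dom C k" "Dom C a = Dom C b"
      "Comp C (Comp C p1 k) a = Comp C (Comp C p1 k) b"
      "Comp C (Comp C p2 k) a = Comp C (Comp C p2 k) b" for a b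
  proof -
    have "Comp C k a = Comp C k b"
      using jointly_monicD[OF jm, of "Comp C k a" "Comp C k b"] ab p kA k(2) by simp
    then show "a = b" using monoD[OF k(1)] ab by simp
  qed
  then show ?thesis unfolding jointly_monic_def parallel_def using p kA k(2) by simp
qed

lemma mono_kernel_pair_Id:
  assumes m: "mono C m"
  shows "kernel_pair C m (Id C (Dom C m)) (Id C (Dom C m))"
proof -
  have mA: "m \<in> Ar C" using m unfolding mono_def by blast
  then have U: "Dom C m \<in> Ob C" by (rule Dom_in_Ob)
  show ?thesis
    unfolding kernel_pair_def pullback_def
  proof (intro conjI ballI impI)
    fix a b assume ab: "a \<in> Ar C" "b \<in> Ar C" "Cod C a = Dom C m" "Cod C b = Dom C m"
      "Dom C a = Dom C b" "Comp C m a = Comp C m b"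
    then have "a = b" by (rule monoD[OF m])
    then show "\<exists>!u. u \<in> Ar C \<and> Dom C u = Dom C a \<and> Cod C u = Dom C (Id C (Dom C m)) \<and>
        Comp C (Id C (Dom C m)) u = a \<and> Comp C (Id C (Dom C m)) u = b"
      using ab U by (intro ex1I[of _ a]) auto
  qed (use mA U in auto)
qed

lemma kernel_pair_diagonal_mono:
  assumes kp: "kernel_pair C m p p"
  shows "mono C m"
  unfolding mono_def
proof (intro conjI ballI impI)
  show "m \<in> Ar C" using kernel_pairD(1)[OF kp] .
  fix a b assume "a \<in> Ar C" "b \<in> Ar C" "Cod C a = Dom C m" "Cod C b = Dom C m"
    "Dom C a = Dom C b" "Comp C m a = Comp C m b"
  then obtain u where "Comp C p u = a" "Comp C p u = b" by (rule kernel_pair_factors[OF kp])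
  then show "a = b" by simp
qed

lemma image_star_eq:
  assumes im: "image_star C q F1 F2 m1 m2" and eq: "Comp C q F1 = Comp C q F2"
  shows "m1 = m2"
proof -
  obtain e where e: "regular_epi C e" "Cod C e = Dom C m1"
    "Comp C m1 e = Comp C q F1" "Comp C m2 e = Comp C q F2"
    using im unfolding image_star_def by blast
  have "m1 \<in> Ar C" "m2 \<in> Ar C" "Dom C m1 = Dom C m2" "Cod C m1 = Cod C m2"
    using im unfolding image_star_def jointly_monic_def parallel_def by auto
  then show ?thesis using regular_epi_cancel[OF e(1)] e(2-4) eq by simp
qed

lemma same_rel_diagonal_left: "same_rel C m m t1 t2 \<Longrightarrow> t1 = t2"
  unfolding same_rel_def by blast

lemma same_rel_diagonal_right:
  assumes "same_rel C s1 s2 t t"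
  shows "s1 = s2"
proof -
  obtain \<phi> where "iso C \<phi>" "Cod C \<phi> = Dom C s1" "Comp C s1 \<phi> = t" "Comp C s2 \<phi> = t"
    using assms unfolding same_rel_def by blast
  moreover have "s1 \<in> Ar C" "s2 \<in> Ar C" "Dom C s1 = Dom C s2"
    using assms unfolding same_rel_def parallel_def by auto
  ultimately show ?thesis using iso_cancel_right by simp
qed

end

locale multipointed_category = category +
  fixes N :: "'m set"
  assumes ideal: "ideal C N"
begin

lemma comp_in_N: "\<lbrakk>f \<in> N; g \<in> Ar C; Cod C g = Dom C f\<rbrakk> \<Longrightarrow> Comp C f g \<in> N"
  using ideal unfolding ideal_def by blast

lemma N_kernelD:
  assumes "N_kernel C N f k"
  shows "f \<in> Ar C" "k \<in> Ar C" "Cod C k = Dom C f" "Comp C f k \<in> N"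
  using assms unfolding N_kernel_def by auto

lemma N_kernel_factors:
  assumes "N_kernel C N f k" "g \<in> Ar C" "Cod C g = Dom C f" "Comp C f g \<in> N"
  obtains u where "u \<in> Ar C" "Dom C u = Dom C g" "Cod C u = Dom C k" "Comp C k u = g"
  using assms unfolding N_kernel_def by blast

lemma N_kernel_mono:
  assumes k: "N_kernel C N f k"
  shows "mono C k"
  unfolding mono_def
proof (intro conjI ballI impI)
  note kD = N_kernelD[OF k]
  show "k \<in> Ar C" by (rule kD(2))
  fix a b assume ab: "a \<in> Ar C" "b \<in> Ar C" "Cod C a = Dom C k" "Cod C b = Dom C k"
    "Dom C a = Dom C b" "Comp C k a = Comp C k b"
  let ?g = "Comp C k a"
  have "?g \<in> Ar C" "Cod C ?g = Dom C f" using kD ab by simp_all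
  moreover have "Comp C f ?g \<in> N"
    using comp_in_N[OF kD(4) ab(1)] kD ab by simp
  ultimately have "\<exists>!u. u \<in> Ar C \<and> Dom C u = Dom C ?g \<and> Cod C u = Dom C k \<and> Comp C k u = ?g"
    using k unfolding N_kernel_def by blast
  then show "a = b" by (rule ex1_unique) (use ab kD in simp_all)
qed

lemma kernel_starE:
  assumes "kernel_star C N f s1 s2"
  obtains p1 p2 k where "kernel_pair C f p1 p2" "N_kernel C N p1 k"
    "s1 = Comp C p1 k" "s2 = Comp C p2 k"
  using assms unfolding kernel_star_def star_of_def by blast

lemma kernel_starD:
  assumes ks: "kernel_star C N f s1 s2"
  shows "s1 \<in> Ar C" "s2 \<in> Ar C" "Cod C s1 = Dom C f" "Cod C s2 = Dom C f"
    "Dom C s1 = Dom C s2" "Comp C f s1 = Comp C f s2" "star C N s1 s2" "f \<in> Ar C"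
proof -
  obtain p1 p2 k where kp: "kernel_pair C f p1 p2" and k: "N_kernel C N p1 k"
    and s: "s1 = Comp C p1 k" "s2 = Comp C p2 k"
    using ks by (rule kernel_starE)
  note pD = kernel_pairD[OF kp] and kD = N_kernelD[OF k]
  show "f \<in> Ar C" by (rule pD(1))
  show "s1 \<in> Ar C" "s2 \<in> Ar C" "Cod C s1 = Dom C f" "Cod C s2 = Dom C f" "Dom C s1 = Dom C s2"
    using pD(1-6) kD(2,3) s by simp_all
  then show "star C N s1 s2"
    unfolding star_def parallel_def using kD(4) s by simp
  have "Comp C f s1 = Comp C (Comp C f p1) k" using s pD(1-6) kD(2,3) by simp
  also have "\<dots> = Comp C (Comp C f p2) k" using pD(7) by simp
  also have "\<dots> = Comp C f s2" using s pD(1-6) kD(2,3) by simp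
  finally show "Comp C f s1 = Comp C f s2" .
qed

lemma kernel_star_jointly_monic:
  assumes "kernel_star C N f s1 s2"
  shows "jointly_monic C s1 s2"
proof -
  obtain p1 p2 k where "kernel_pair C f p1 p2" "N_kernel C N p1 k"
    "s1 = Comp C p1 k" "s2 = Comp C p2 k"
    using assms by (rule kernel_starE)
  then show ?thesis
    using jointly_monic_comp_mono kernel_pair_jointly_monic N_kernel_mono N_kernelD(3) by metis
qed

lemma kernel_star_factors:
  assumes ks: "kernel_star C N f s1 s2" and t: "star C N t1 t2" "Cod C t1 = Dom C f"
    and eq: "Comp C f t1 = Comp C f t2"
  obtains v where "v \<in> Ar C" "Dom C v = Dom C t1" "Cod C v = Dom C s1"
    "Comp C s1 v = t1" "Comp C s2 v = t2"
proof -
  obtain p1 p2 k where kp: "kernel_pair C f p1 p2" and k: "N_kernel C N p1 k"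
    and s: "s1 = Comp C p1 k" "s2 = Comp C p2 k"
    using ks by (rule kernel_starE)
  note pD = kernel_pairD[OF kp] and kD = N_kernelD[OF k]
  have tD: "t1 \<in> Ar C" "t2 \<in> Ar C" "Dom C t1 = Dom C t2" "Cod C t2 = Dom C f" "t1 \<in> N"
    using t unfolding star_def parallel_def by auto
  obtain u where u: "u \<in> Ar C" "Dom C u = Dom C t1" "Cod C u = Dom C p1"
    "Comp C p1 u = t1" "Comp C p2 u = t2"
    using kernel_pair_factors[OF kp tD(1,2) t(2) tD(4,3) eq] .
  obtain v where v: "v \<in> Ar C" "Dom C v = Dom C u" "Cod C v = Dom C k" "Comp C k v = u"
    using N_kernel_factors[OF k u(1,3)] u(4) tD(5) by blast
  show ?thesis
    using that[of v] v u s pD(1-6) kD(2,3) by simp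
qed

lemma kernel_star_exists:
  assumes "finitely_complete C" "has_N_kernels C N" "f \<in> Ar C"
  obtains s1 s2 where "kernel_star C N f s1 s2"
proof -
  obtain p1 p2 where kp: "kernel_pair C f p1 p2"
    using assms(1,3) unfolding finitely_complete_def kernel_pair_def by blast
  moreover obtain k where "N_kernel C N p1 k"
    using assms(2) kernel_pairD(2)[OF kp] unfolding has_N_kernels_def by blast
  ultimately have "kernel_star C N f (Comp C p1 k) (Comp C p2 k)"
    using kernel_pairD[OF kp] unfolding kernel_star_def star_of_def parallel_def by (intro exI) auto
  then show ?thesis by (rule that)
qed

lemma diag_star_eq: "diag_star C N U d1 d2 \<Longrightarrow> d1 = d2"
  unfolding diag_star_def star_of_def by blast

lemma mono_diagonal_kernel_star:
  assumes "has_N_kernels C N" "mono C m"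
  obtains s where "kernel_star C N m s s"
proof -
  let ?i = "Id C (Dom C m)"
  have kp: "kernel_pair C m ?i ?i" using assms(2) by (rule mono_kernel_pair_Id)
  obtain k where "N_kernel C N ?i k"
    using assms(1) kernel_pairD(2)[OF kp] unfolding has_N_kernels_def by blast
  then have "kernel_star C N m (Comp C ?i k) (Comp C ?i k)"
    using kp kernel_pairD(2)[OF kp]
    unfolding kernel_star_def star_of_def parallel_def by blast
  then show ?thesis by (rule that)
qed

text \<open>The comparison isomorphism between a diagonal kernel star (s, s) of g and the
  diagonal star (d, d), d the N-kernel of the identity, comes from two universal properties:
  d factors through (s, s) because g d = g d, and s factors through d because s is in N.\<close>

lemma diagonal_kernel_star_same_rel_diag_star:
  assumes HK: "has_N_kernels C N" and ks: "kernel_star C N g s s"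
  obtains d where "diag_star C N (Dom C g) d d" "same_rel C s s d d"
proof -
  note sD = kernel_starD[OF ks]
  define Z where "Z = Dom C g"
  have Z: "Z \<in> Ob C" unfolding Z_def using sD(8) by (rule Dom_in_Ob)
  obtain d where d: "N_kernel C N (Id C Z) d"
    using HK Id_in_Ar[OF Z] unfolding has_N_kernels_def by blast
  note dD = N_kernelD[OF d]
  have dA: "d \<in> Ar C" "Cod C d = Z" "d \<in> N" "Comp C (Id C Z) d = d"
    using dD Z by simp_all
  have diag: "diag_star C N Z d d"
    unfolding diag_star_def star_of_def parallel_def using d Z dA by auto
  have "star C N d d" unfolding star_def parallel_def using dA by simp
  then obtain \<phi> where \<phi>: "\<phi> \<in> Ar C" "Dom C \<phi> = Dom C d" "Cod C \<phi> = Dom C s" "Comp C s \<phi> = d"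
    using kernel_star_factors[OF ks, of d d] dA Z_def by blast
  have "s \<in> N" using sD(7) unfolding star_def by blast
  then have "Comp C (Id C Z) s \<in> N" using sD(1,3) Z_def by simp
  then obtain \<psi> where \<psi>: "\<psi> \<in> Ar C" "Dom C \<psi> = Dom C s" "Cod C \<psi> = Dom C d" "Comp C d \<psi> = s"
    using N_kernel_factors[OF d sD(1)] sD(3) Z Z_def by auto
  have "Comp C d (Comp C \<psi> \<phi>) = Comp C d (Id C (Dom C d))"
    using \<phi> \<psi> dA(1) sD(1) Dom_in_Ob by (simp flip: comp_assoc)
  then have \<psi>\<phi>: "Comp C \<psi> \<phi> = Id C (Dom C d)"
    using monoD[OF N_kernel_mono[OF d]] \<phi> \<psi> dA(1) Dom_in_Ob by simp
  have "Comp C s (Comp C \<phi> \<psi>) = Comp C s (Id C (Dom C s))"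
    using \<phi> \<psi> dA(1) sD(1) Dom_in_Ob by (simp flip: comp_assoc)
  then have \<phi>\<psi>: "Comp C \<phi> \<psi> = Id C (Dom C s)"
    using jointly_monicD[OF kernel_star_jointly_monic[OF ks]] \<phi> \<psi> sD(1) Dom_in_Ob by simp
  have "iso C \<phi>" unfolding iso_def using \<phi> \<psi> \<psi>\<phi> \<phi>\<psi> by auto
  then have "same_rel C s s d d"
    unfolding same_rel_def parallel_def using \<phi> dA sD(1,3) Z_def by auto
  then show ?thesis using that diag Z_def by blast
qed

lemma kernel_star_eq_diag_star_iff_diagonal:
  assumes "has_N_kernels C N"
  shows "(\<exists>s1 s2 d1 d2. kernel_star C N m s1 s2 \<and> diag_star C N (Dom C m) d1 d2 \<and>
      same_rel C s1 s2 d1 d2) \<longleftrightarrow> (\<exists>s. kernel_star C N m s s)"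
proof
  assume "\<exists>s1 s2 d1 d2. kernel_star C N m s1 s2 \<and> diag_star C N (Dom C m) d1 d2 \<and>
      same_rel C s1 s2 d1 d2"
  then obtain s1 s2 d where "kernel_star C N m s1 s2" "same_rel C s1 s2 d d"
    using diag_star_eq by metis
  then show "\<exists>s. kernel_star C N m s s" using same_rel_diagonal_right by metis
next
  assume "\<exists>s. kernel_star C N m s s"
  then show "\<exists>s1 s2 d1 d2. kernel_star C N m s1 s2 \<and> diag_star C N (Dom C m) d1 d2 \<and>
      same_rel C s1 s2 d1 d2"
    using diagonal_kernel_star_same_rel_diag_star[OF assms] by metis
qed

lemma star_regular_diagonal_kernel_star_mono:
  assumes SR: "star_regular C N" and ks: "kernel_star C N m s s"
  shows "mono C m"
proof -
  obtain p1 p2 k where kp: "kernel_pair C m p1 p2" and k: "N_kernel C N p1 k"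
    and s: "s = Comp C p1 k" "s = Comp C p2 k"
    using ks by (rule kernel_starE)
  note pD = kernel_pairD[OF kp]
  obtain q where q: "coequaliser C p1 p2 q"
    using SR kp unfolding star_regular_def regular_category_def by blast
  note qD = coequaliserD[OF q]
  have "regular_epi C q" unfolding regular_epi_def using q by blast
  then obtain t1 t2 where t: "star C N t1 t2" and tq: "coequaliser C t1 t2 q"
    using SR unfolding star_regular_def by blast
  note tD = coequaliserD[OF tq]
  obtain g where g: "g \<in> Ar C" "Dom C g = Cod C q" "Comp C g q = m"
    using coequaliser_factors[OF q pD(1)] pD(4,7) by metis
  have Cq: "Cod C t1 = Dom C m" using tD(6) qD(6) pD(4) by simp
  have "Comp C m t1 = Comp C g (Comp C q t1)" using g tD(1,6) qD(5) by (simp flip: comp_assoc)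
  also have "\<dots> = Comp C m t2" using g tD(2,4,6,7) qD(5) by (simp flip: comp_assoc)
  finally obtain v where "Comp C s v = t1" "Comp C s v = t2"
    using kernel_star_factors[OF ks t Cq] by blast
  then have "coequaliser C t1 t1 q" using tq by simp
  then obtain w where w: "w \<in> Ar C" "Dom C w = Cod C q" "Comp C w q = Id C (Dom C q)"
    by (rule coequaliser_equal_pair_retraction)
  have "p1 = Comp C (Comp C w q) p1" using w(3) pD(2,4) qD(6) pD(4) by simp
  also have "\<dots> = Comp C (Comp C w q) p2" using w(1,2) qD(5-7) pD(2-5) by simp
  also have "\<dots> = p2" using w(3) pD(3,5) qD(6) pD(4) by simp
  finally have "kernel_pair C m p1 p1" using kp by simp
  then show ?thesis by (rule kernel_pair_diagonal_mono)
qed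

text \<open>Write f = g q with q the coequaliser of the kernel star F* of f; left saturation of the
  diamond (q, f, g, 1) identifies the kernel star of g with q(F*), which is diagonal since
  q coequalises F*. So g is monic, hence invertible, and f coequalises F*.\<close>

lemma regular_epi_coequalises_kernel_star:
  assumes reg: "regular_category C" and HK: "has_N_kernels C N"
    and CK: "\<forall>f\<in>Ar C. \<forall>s1 s2. kernel_star C N f s1 s2 \<longrightarrow> (\<exists>q. coequaliser C s1 s2 q)"
    and LS: "\<forall>e f g. regular_diamond C e f g (Id C (Cod C f)) \<longrightarrow>
               left_saturated C N e f g (Id C (Cod C f))"
    and diagonal_mono: "\<forall>m\<in>Ar C. (\<exists>s. kernel_star C N m s s) \<longrightarrow> mono C m"
    and f: "regular_epi C f"
  obtains s1 s2 where "kernel_star C N f s1 s2" "coequaliser C s1 s2 f"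
proof -
  obtain a b where fc: "coequaliser C a b f" using f unfolding regular_epi_def by blast
  note fD = coequaliserD[OF fc]
  obtain s1 s2 where ks: "kernel_star C N f s1 s2"
    using kernel_star_exists reg HK fD(5) unfolding regular_category_def by blast
  note sD = kernel_starD[OF ks]
  obtain q where qc: "coequaliser C s1 s2 q" using CK fD(5) ks by blast
  note qD = coequaliserD[OF qc]
  have q: "regular_epi C q" unfolding regular_epi_def using qc by blast
  obtain g where g: "g \<in> Ar C" "Dom C g = Cod C q" "Cod C g = Cod C f" "Comp C g q = f"
    using coequaliser_factors[OF qc fD(5)] sD(3,6) by metis
  have "regular_epi C g"
    using coequaliser_right_factor[OF fc q g(1,2,4)] unfolding regular_epi_def by blast
  moreover have "regular_epi C (Id C (Cod C f))" using fD(5) Cod_in_Ob regular_epi_Id by blast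
  moreover have "diamond C q f g (Id C (Cod C f))"
    unfolding diamond_def using qD(5,6) sD(3) fD(5) g Cod_in_Ob by simp
  ultimately have "regular_diamond C q f g (Id C (Cod C f))"
    unfolding regular_diamond_def using q f by blast
  then obtain F1 F2 G1 G2 m1 m2 where F: "kernel_star C N f F1 F2"
    and G: "kernel_star C N g G1 G2" and im: "image_star C q F1 F2 m1 m2"
    and sr: "same_rel C m1 m2 G1 G2"
    using LS unfolding left_saturated_def by blast
  note FD = kernel_starD[OF F]
  obtain v where v: "v \<in> Ar C" "Cod C v = Dom C s1" "Comp C s1 v = F1" "Comp C s2 v = F2"
    using kernel_star_factors[OF ks FD(7,3,6)] by blast
  have "Comp C q F1 = Comp C (Comp C q s1) v" using v qD(5,6) sD(1,3) by simp
  also have "\<dots> = Comp C q F2" using v qD(5,6,7) sD(1-5) by simp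
  finally have "m1 = m2" by (rule image_star_eq[OF im])
  then have "G1 = G2" using sr same_rel_diagonal_left by blast
  then have "mono C g" using diagonal_mono g(1) G by blast
  then have "iso C g" using \<open>regular_epi C g\<close> by (rule mono_regular_epi_iso)
  then have "coequaliser C s1 s2 f" using coequaliser_comp_iso[OF qc _ g(2)] g(4) by simp
  with ks show ?thesis by (rule that)
qed
end

theorem lemma2p4:
  fixes C :: "('o, 'm) category" and N :: "'m set"
  assumes "regular_category C" and "ideal C N" and "has_N_kernels C N"
    and "\<forall>f\<in>Ar C. \<forall>s1 s2. kernel_star C N f s1 s2 \<longrightarrow> (\<exists>q. coequaliser C s1 s2 q)"
    and "\<forall>e f g. regular_diamond C e f g (Id C (Cod C f)) \<longrightarrow>
               left_saturated C N e f g (Id C (Cod C f))"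
  shows "star_regular C N \<longleftrightarrow>
    (\<forall>m\<in>Ar C. mono C m \<longleftrightarrow>
       (\<exists>s1 s2 d1 d2. kernel_star C N m s1 s2 \<and> diag_star C N (Dom C m) d1 d2 \<and>
                      same_rel C s1 s2 d1 d2))"
proof -
  interpret multipointed_category C N
    using assms(1,2) unfolding regular_category_def by unfold_locales blast+
  show ?thesis
    unfolding kernel_star_eq_diag_star_iff_diagonal[OF assms(3)]
  proof
    assume "star_regular C N"
    then show "\<forall>m\<in>Ar C. mono C m \<longleftrightarrow> (\<exists>s. kernel_star C N m s s)"
      using mono_diagonal_kernel_star[OF assms(3)] star_regular_diagonal_kernel_star_mono by metis
  next
    assume "\<forall>m\<in>Ar C. mono C m \<longleftrightarrow> (\<exists>s. kernel_star C N m s s)"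
    then have "\<forall>q. regular_epi C q \<longrightarrow> (\<exists>t1 t2. star C N t1 t2 \<and> coequaliser C t1 t2 q)"
      using regular_epi_coequalises_kernel_star[OF assms(1,3-5)] kernel_starD(7) by metis
    with assms(1-3) show "star_regular C N" unfolding star_regular_def by blast
  qed
qed

end
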